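(* For every oriented virtual knot diagram $K$, $\gamma(K)=a+(2k)t$ for some integers $a$ and $k$; that is, the coefficient of $t$ in $\gamma(K)$ is even.
   Context: For an oriented virtual knot diagram $K$ and a classical crossing $c$ with sign $sgn(c)\in\{\pm1\}$, let $K_c$ be the two-component oriented virtual link diagram obtained by smoothing $c$ in the orientation-respecting way. Let $L(K_c)$ be the sum of the signs of all classical crossings of $K_c$ at which the two strands belong to different components, and $\bar L(K_c)=L(K_c)\bmod 2\in\{0,1\}$. Define $\gamma(K)=\sum_{c} t^{\bar L(K_c)}\,sgn(c)$, summing over all classical crossings, an element of the free $\mathbb{Z}$-module on $\{1,t\}$. *)

theory Defs
  imports Main
begin

(* An oriented virtual knot diagram is encoded by its Gauss diagram:
   a cyclic Gauss word w (read along the orientation of the knot), each entry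
   (c, b) meaning the knot passes through classical crossing c, as over-strand
   if b = True and as under-strand if b = False; and a sign function s. *)

definition crossings :: "(nat \<times> bool) list \<Rightarrow> nat set" where
  "crossings w = fst ` set w"

definition gauss_diagram :: "(nat \<times> bool) list \<Rightarrow> (nat \<Rightarrow> int) \<Rightarrow> bool" where
  "gauss_diagram w s \<longleftrightarrow>
     (\<forall>c \<in> crossings w.
        length (filter (\<lambda>x. x = (c, True)) w) = 1 \<and>
        length (filter (\<lambda>x. x = (c, False)) w) = 1 \<and>
        (s c = 1 \<or> s c = -1))"

(* position i lies on the arc strictly between the two passages through c;
   smoothing c splits the knot into this arc and the complementary arc *)
definition in_arc :: "(nat \<times> bool) list \<Rightarrow> nat \<Rightarrow> nat \<Rightarrow> bool" where
  "in_arc w c i \<longleftrightarrow> (\<exists>j<i. fst (w ! j) = c) \<and> (\<exists>k. i < k \<and> k < length w \<and> fst (w ! k) = c)"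

(* crossing d of K_c has its two strands on different components *)
definition separated :: "(nat \<times> bool) list \<Rightarrow> nat \<Rightarrow> nat \<Rightarrow> bool" where
  "separated w c d \<longleftrightarrow> card {i. i < length w \<and> fst (w ! i) = d \<and> in_arc w c i} = 1"

definition smoothing_L :: "(nat \<times> bool) list \<Rightarrow> (nat \<Rightarrow> int) \<Rightarrow> nat \<Rightarrow> int" where
  "smoothing_L w s c = (\<Sum>d \<in> crossings w - {c}. if separated w c d then s d else 0)"

(* gamma(K) in the free Z-module on {1, t}, as (coefficient of 1, coefficient of t) *)
definition gamma :: "(nat \<times> bool) list \<Rightarrow> (nat \<Rightarrow> int) \<Rightarrow> int \<times> int" where
  "gamma w s =
    ((\<Sum>c \<in> crossings w. if smoothing_L w s c mod 2 = 0 then s c else 0),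
     (\<Sum>c \<in> crossings w. if smoothing_L w s c mod 2 = 1 then s c else 0))"

end

theory Submission
  imports Defs
begin

text \<open>Modulo 2 every sign is 1, so the coefficient of t in gamma is congruent to the sum of all
  L(K_c), which in turn counts the ordered pairs (c, d) of distinct crossings whose chords
  interlace in the Gauss diagram. Interlacing is symmetric, so each unordered pair is counted
  twice and the total is even.\<close>

definition passages :: "(nat \<times> bool) list \<Rightarrow> nat \<Rightarrow> nat set" where
  "passages w c = {i. i < length w \<and> fst (w ! i) = c}"

definition interlaced :: "nat \<Rightarrow> nat \<Rightarrow> nat \<Rightarrow> nat \<Rightarrow> bool" where
  "interlaced p q p' q' \<longleftrightarrow> (p < p' \<and> p' < q) \<noteq> (p < q' \<and> q' < q)"

lemma interlaced_sym:
  assumes "p < q" "p' < q'" "{p, q} \<inter> {p', q'} = {}"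
  shows "interlaced p q p' q' = interlaced p' q' p q"
  using assms unfolding interlaced_def by auto

lemma length_filter_eq_1_singleton_index:
  assumes "length (filter (\<lambda>x. x = a) w) = 1"
  obtains i where "{i. i < length w \<and> w ! i = a} = {i}"
proof -
  have "card {i. i < length w \<and> w ! i = a} = 1"
    using assms by (simp add: length_filter_conv_card)
  then show ?thesis using that card_1_singletonE by metis
qed

lemma gauss_diagram_passages:
  assumes "gauss_diagram w s" and "c \<in> crossings w"
  obtains p q where "p < q" and "passages w c = {p, q}"
proof -
  have once: "length (filter (\<lambda>x. x = (c, b)) w) = 1" for b
    using assms unfolding gauss_diagram_def by (cases b) auto
  obtain i where i: "{k. k < length w \<and> w ! k = (c, True)} = {i}"
    using length_filter_eq_1_singleton_index[OF once] .
  obtain j where j: "{k. k < length w \<and> w ! k = (c, False)} = {j}"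
    using length_filter_eq_1_singleton_index[OF once] .
  have "fst x = c \<longleftrightarrow> x = (c, True) \<or> x = (c, False)" for x :: "nat \<times> bool"
    by (cases x) auto
  then have "passages w c = {k. k < length w \<and> w ! k = (c, True)}
                          \<union> {k. k < length w \<and> w ! k = (c, False)}"
    unfolding passages_def by blast
  also have "\<dots> = {i, j}"
    unfolding i j by auto
  finally have pass: "passages w c = {i, j}" .
  have "i \<in> {k. k < length w \<and> w ! k = (c, True)}"
    and "j \<in> {k. k < length w \<and> w ! k = (c, False)}"
    unfolding i j by simp_all
  then have "i \<noteq> j" by auto
  then consider "i < j" | "j < i" by linarith
  then show ?thesis
    using that pass by cases (simp_all add: insert_commute)
qed

lemma in_arc_iff:
  assumes "passages w c = {p, q}" and "p < q"
  shows "in_arc w c i \<longleftrightarrow> p < i \<and> i < q"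
proof
  assume "in_arc w c i"
  then obtain j k where "j < i" "j \<in> passages w c" "i < k" "k \<in> passages w c"
    unfolding in_arc_def passages_def by auto
  then show "p < i \<and> i < q" using assms by auto
next
  assume "p < i \<and> i < q"
  moreover have "p \<in> passages w c" "q \<in> passages w c" using assms by auto
  ultimately show "in_arc w c i" unfolding in_arc_def passages_def by auto
qed

lemma card_filter_doubleton_eq_1:
  assumes "a \<noteq> b"
  shows "card {i. (i = a \<or> i = b) \<and> P i} = 1 \<longleftrightarrow> P a \<noteq> P b"
proof -
  have set_eq: "{i. (i = a \<or> i = b) \<and> P i} =
          (if P a then {a} else {}) \<union> (if P b then {b} else {})"
    by auto
  show ?thesis
    unfolding set_eq using assms by (cases "P a"; cases "P b") auto
qed

lemma separated_iff_interlaced: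
  assumes "passages w c = {p, q}" "p < q" and "passages w d = {p', q'}" "p' < q'"
  shows "separated w c d \<longleftrightarrow> interlaced p q p' q'"
proof -
  have "{i. i < length w \<and> fst (w ! i) = d \<and> in_arc w c i}
          = {i. (i = p' \<or> i = q') \<and> p < i \<and> i < q}"
    using assms(3) in_arc_iff[OF assms(1,2)] unfolding passages_def by blast
  then show ?thesis
    unfolding separated_def interlaced_def
    using card_filter_doubleton_eq_1[of p' q'] assms(4) by simp
qed

lemma separated_sym:
  assumes "gauss_diagram w s" "c \<in> crossings w" "d \<in> crossings w" "c \<noteq> d"
  shows "separated w c d = separated w d c"
proof -
  obtain p q where c: "p < q" "passages w c = {p, q}"
    using gauss_diagram_passages[OF assms(1,2)] .
  obtain p' q' where d: "p' < q'" "passages w d = {p', q'}"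
    using gauss_diagram_passages[OF assms(1,3)] .
  have "passages w c \<inter> passages w d = {}"
    using assms(4) unfolding passages_def by auto
  then show ?thesis
    using separated_iff_interlaced[OF c(2,1) d(2,1)] separated_iff_interlaced[OF d(2,1) c(2,1)]
      interlaced_sym[OF c(1) d(1)] c(2) d(2) by simp
qed

lemma even_sum_offdiag_sym:
  fixes f :: "'a::linorder \<Rightarrow> 'a \<Rightarrow> 'b::semiring_parity"
  assumes fin: "finite C" and sym: "\<And>c d. c \<in> C \<Longrightarrow> d \<in> C \<Longrightarrow> c \<noteq> d \<Longrightarrow> f c d = f d c"
  shows "even (\<Sum>c\<in>C. \<Sum>d\<in>C - {c}. f c d)"
proof -
  let ?below = "\<Sum>c\<in>C. \<Sum>d\<in>{d\<in>C. d < c}. f c d"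
  let ?above = "\<Sum>c\<in>C. \<Sum>d\<in>{d\<in>C. c < d}. f c d"
  have "(\<Sum>d\<in>C - {c}. f c d) = (\<Sum>d\<in>{d\<in>C. d < c}. f c d) + (\<Sum>d\<in>{d\<in>C. c < d}. f c d)"
    for c
  proof -
    have "C - {c} = {d\<in>C. d < c} \<union> {d\<in>C. c < d}" by auto
    then have "(\<Sum>d\<in>C - {c}. f c d) = (\<Sum>d\<in>{d\<in>C. d < c} \<union> {d\<in>C. c < d}. f c d)"
      by simp
    also have "\<dots> = (\<Sum>d\<in>{d\<in>C. d < c}. f c d) + (\<Sum>d\<in>{d\<in>C. c < d}. f c d)"
      by (rule sum.union_disjoint) (use fin in auto)
    finally show ?thesis .
  qed
  then have "(\<Sum>c\<in>C. \<Sum>d\<in>C - {c}. f c d) = ?below + ?above"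
    by (simp add: sum.distrib)
  moreover have "?above = ?below"
  proof -
    have "?above = (\<Sum>d\<in>C. \<Sum>c\<in>{c\<in>C. c < d}. f c d)"
      by (rule sum.swap_restrict[OF fin fin])
    also have "\<dots> = ?below"
      using sym by (intro sum.cong) auto
    finally show ?thesis .
  qed
  ultimately show ?thesis by simp
qed

lemma sum_mod_2_cong:
  fixes f g :: "'a \<Rightarrow> int"
  assumes "\<And>x. x \<in> A \<Longrightarrow> f x mod 2 = g x mod 2"
  shows "(\<Sum>x\<in>A. f x) mod 2 = (\<Sum>x\<in>A. g x) mod 2"
  using assms by (metis (mono_tags, lifting) mod_sum_eq sum.cong)

lemma gauss_diagram_sign_odd:
  assumes "gauss_diagram w s" "c \<in> crossings w"
  shows "odd (s c)"
  using assms unfolding gauss_diagram_def by auto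

lemma smoothing_L_mod_2:
  assumes "gauss_diagram w s"
  shows "smoothing_L w s c mod 2
           = (\<Sum>d\<in>crossings w - {c}. of_bool (separated w c d)) mod 2"
  unfolding smoothing_L_def
  using gauss_diagram_sign_odd[OF assms]
  by (intro sum_mod_2_cong) (auto simp: odd_iff_mod_2_eq_one)

theorem mainTheorem2:
  fixes w :: "(nat \<times> bool) list" and s :: "nat \<Rightarrow> int"
  assumes "gauss_diagram w s"
  shows "\<exists>a k :: int. gamma w s = (a, 2 * k)"
proof -
  let ?C = "crossings w" and ?L = "smoothing_L w s"
  have "finite ?C" unfolding crossings_def by simp
  have "(\<Sum>c\<in>?C. if ?L c mod 2 = 1 then s c else 0) mod 2 = (\<Sum>c\<in>?C. ?L c) mod 2"
    using gauss_diagram_sign_odd[OF assms]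
    by (intro sum_mod_2_cong) (auto simp: odd_iff_mod_2_eq_one)
  also have "\<dots> = (\<Sum>c\<in>?C. \<Sum>d\<in>?C - {c}. of_bool (separated w c d)) mod 2"
    using smoothing_L_mod_2[OF assms] by (intro sum_mod_2_cong) simp
  also have "\<dots> = 0"
    using even_sum_offdiag_sym[OF \<open>finite ?C\<close>, of "\<lambda>c d. of_bool (separated w c d) :: int"]
      separated_sym[OF assms] by simp
  finally have "even (\<Sum>c\<in>?C. if ?L c mod 2 = 1 then s c else 0)" by presburger
  then show ?thesis unfolding gamma_def by (auto elim: evenE)
qed

end
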